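(* Let $s\ge 2$ and $p,q>0$. Consider on $\mathbb Z$ the Markov process with rates $q(x,x+1)=p$, $q(x,x-1)=q$ (and $0$ otherwise), and the $2$-leg spider walk with span bounded by $s$, i.e. the continuous-time process $S_t=(S_{1,t},S_{2,t})$ on $\{(x,x+j):x\in\mathbb Z,1\le j\le s\}$ in which each leg jumps by $+1$ at rate $p$ and by $-1$ at rate $q$, a jump being performed only if afterwards the legs occupy distinct sites at distance at most $s$ (and the configuration is then relabeled so that the first leg is the leftmost one). Then almost surely $\lim_{t\to\infty} S_{1,t}/t=(p-q)\left(1-\frac1s\right)$. In particular this speed is strictly smaller in absolute value than $|p-q|$ when $p\ne q$, and converges to $p-q$ as $s\to\infty$. *)

theory Defs
  imports "HOL-Probability.Probability"
begin

text \<open>A move is a pair (second_leg, up): which leg attempts to jump (False = first leg,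
  True = second leg) and in which direction (True = +1, False = -1).\<close>

definition spider_step :: "nat \<Rightarrow> int \<times> int \<Rightarrow> bool \<times> bool \<Rightarrow> int \<times> int" where
  "spider_step s c m =
     (let d = (if snd m then 1 else -1);
          a' = (if fst m then fst c else fst c + d);
          b' = (if fst m then snd c + d else snd c)
      in if a' \<noteq> b' \<and> \<bar>a' - b'\<bar> \<le> int s then (min a' b', max a' b') else c)"

primrec spider_chain :: "nat \<Rightarrow> int \<times> int \<Rightarrow> (nat \<Rightarrow> bool \<times> bool) \<Rightarrow> nat \<Rightarrow> int \<times> int" where
  "spider_chain s c0 \<xi> 0 = c0"
| "spider_chain s c0 \<xi> (Suc n) = spider_step s (spider_chain s c0 \<xi> n) (\<xi> n)"

text \<open>Number of clock rings up to time t, the n-th ring happening at time T 0 + ... + T n.\<close>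
definition num_rings :: "(nat \<Rightarrow> real) \<Rightarrow> real \<Rightarrow> nat" where
  "num_rings T t = card {n. (\<Sum>i\<le>n. T i) \<le> t}"

text \<open>Continuous-time spider walk (uniformization construction): a Poisson clock of total
  rate 2(p+q) rings; at each ring an attempted move (leg, direction) is chosen with
  probabilities p/(2(p+q)) for +1 and q/(2(p+q)) for -1 for each leg.\<close>
definition spider_walk ::
  "nat \<Rightarrow> int \<times> int \<Rightarrow> (nat \<Rightarrow> real) \<Rightarrow> (nat \<Rightarrow> bool \<times> bool) \<Rightarrow> real \<Rightarrow> int \<times> int" where
  "spider_walk s c0 T \<xi> t = spider_chain s c0 \<xi> (num_rings T t)"

end

theory Submission
  imports Defs "HOL-Library.Discrete_Functions" "HOL-Real_Asymp.Real_Asymp"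
begin

(* Write a configuration as (a, a + g) with gap g in {1..s}.  The continuous-time walk is the
   jump chain driven by i.i.d. attempted moves, observed at the number N(t) of rings of a Poisson
   clock of rate 2(p+q).

   1. Martingale decomposition.  A corrector w(g), quadratic in the gap, solves a discrete Poisson
      equation whose boundary terms at g = 1 and g = s account for the blocked jumps.  Then
      a_n + w(g_n) - n v with v = (p-q)(1-1/s)/(2(p+q)) has bounded increments of conditional
      mean zero; such increments are orthogonal in L^2.
   2. Strong law of large numbers for orthogonal sequences with bounded second moments, proved by
      Chebyshev and Borel-Cantelli along the squares m^2 and interpolation between squares
      (bounded increments for the chain, monotonicity for the ring times).  It yields a_n/n -> v
      and (T_0 + ... + T_(n-1))/n -> 1/(2(p+q)) almost surely.
   3. Renewal: if a_n/n -> v and the ring times average to mu > 0, then a_(N(t))/t -> v/mu. *)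

section \<open>Limits along the squares\<close>

lemma floor_sqrt_tendsto_top: "filterlim floor_sqrt at_top sequentially"
  unfolding filterlim_at_top
proof
  fix Z :: nat
  show "eventually (\<lambda>n. Z \<le> floor_sqrt n) sequentially"
    by (rule eventually_sequentiallyI[of "Z^2"]) (rule le_floor_sqrtI)
qed

lemma floor_sqrt_pred_tendsto_top: "filterlim (\<lambda>n. floor_sqrt n - 1) at_top sequentially"
proof -
  have "\<forall>\<^sub>F n in sequentially. Z \<le> floor_sqrt n - 1" for Z
    using floor_sqrt_tendsto_top[unfolded filterlim_at_top, rule_format, of "Suc Z"]
    by eventually_elim simp
  thus ?thesis unfolding filterlim_at_top by blast
qed

lemma increments_bound_distance:
  fixes S :: "nat \<Rightarrow> real"
  assumes B: "\<And>n. \<bar>S (Suc n) - S n\<bar> \<le> B" and "k \<le> n"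
  shows "\<bar>S n - S k\<bar> \<le> B * real (n - k)"
  using \<open>k \<le> n\<close>
proof (induction n rule: dec_induct)
  case (step n)
  have "\<bar>S (Suc n) - S k\<bar> \<le> \<bar>S (Suc n) - S n\<bar> + \<bar>S n - S k\<bar>" by simp
  also have "\<dots> \<le> B + B * real (n - k)" using B[of n] step.IH by simp
  also have "\<dots> = B * real (Suc n - k)" using step.hyps by (simp add: Suc_diff_le algebra_simps)
  finally show ?case .
qed simp

(* Comparing S n with S at the largest square below n, whose distance from n is at most 2 sqrt n. *)
lemma bounded_increments_square_estimate:
  fixes S :: "nat \<Rightarrow> real"
  assumes B: "\<And>n. \<bar>S (Suc n) - S n\<bar> \<le> B" and n: "1 \<le> n"
  defines "r \<equiv> floor_sqrt n"
  shows "\<bar>S n\<bar> / real n \<le> \<bar>S (r^2)\<bar> / real (r^2) + 2 * B / real r"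
proof -
  have B0: "0 \<le> B" using B[of 0] by simp
  have r1: "r \<ge> 1" using n by (simp add: r_def Suc_le_eq)
  have rn: "r^2 \<le> n" "n < (Suc r)^2"
    unfolding r_def by (rule floor_sqrt_power2_le, rule Suc_floor_sqrt_power2_gt)
  have "n - r^2 \<le> 2 * r" using rn(2) by (simp add: power2_eq_square)
  hence square_gap: "real (n - r^2) \<le> 2 * real r" by linarith
  have "\<bar>S n\<bar> \<le> \<bar>S (r^2)\<bar> + \<bar>S n - S (r^2)\<bar>" by simp
  also have "\<dots> \<le> \<bar>S (r^2)\<bar> + 2 * B * real r"
    using increments_bound_distance[of S B, OF B rn(1)] mult_left_mono[OF square_gap B0] by simp
  finally have Sn: "\<bar>S n\<bar> \<le> \<bar>S (r^2)\<bar> + 2 * B * real r" .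
  have "\<bar>S n\<bar> / real n \<le> (\<bar>S (r^2)\<bar> + 2 * B * real r) / real n"
    by (rule divide_right_mono[OF Sn]) simp
  also have "\<dots> \<le> (\<bar>S (r^2)\<bar> + 2 * B * real r) / real (r^2)"
    using r1 rn(1) B0 n by (intro divide_left_mono) auto
  also have "\<dots> = \<bar>S (r^2)\<bar> / real (r^2) + 2 * B / real r"
    using r1 by (simp add: add_divide_distrib power2_eq_square)
  finally show ?thesis .
qed

lemma limit_from_squares_bounded_increments:
  fixes S :: "nat \<Rightarrow> real"
  assumes B: "\<And>n. \<bar>S (Suc n) - S n\<bar> \<le> B"
    and squares: "(\<lambda>m. S ((Suc m)^2) / real ((Suc m)^2)) \<longlonglongrightarrow> 0"
  shows "(\<lambda>n. S n / real n) \<longlonglongrightarrow> 0"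
proof -
  define f where "f m = \<bar>S ((Suc m)^2)\<bar> / real ((Suc m)^2) + 2 * B / real (Suc m)" for m
  have "f \<longlonglongrightarrow> 0 + 0"
    unfolding f_def using tendsto_rabs_zero[OF squares]
    by (intro tendsto_add LIMSEQ_Suc[OF lim_const_over_n]) (simp add: abs_divide)
  hence f_sqrt: "(\<lambda>n. f (floor_sqrt n - 1)) \<longlonglongrightarrow> 0"
    using filterlim_compose[OF _ floor_sqrt_pred_tendsto_top] by simp
  have "eventually (\<lambda>n. norm (S n / real n) \<le> f (floor_sqrt n - 1)) sequentially"
  proof (rule eventually_sequentiallyI[of 1])
    fix n :: nat assume n: "1 \<le> n"
    hence "Suc (floor_sqrt n - 1) = floor_sqrt n" by (simp add: Suc_le_eq)
    thus "norm (S n / real n) \<le> f (floor_sqrt n - 1)"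
      using bounded_increments_square_estimate[of S B, OF B n] by (simp add: f_def)
  qed
  thus ?thesis by (rule Lim_null_comparison[OF _ f_sqrt])
qed

lemma floor_sqrt_square_ratio_below: "(\<lambda>n. real ((floor_sqrt n)^2) / real n) \<longlonglongrightarrow> 1"
proof (rule tendsto_sandwich[OF _ _ _ tendsto_const])
  have "(\<lambda>m. real m ^ 2 / real (Suc m) ^ 2) \<longlonglongrightarrow> 1" by real_asymp
  thus "(\<lambda>n. real (floor_sqrt n) ^ 2 / real (Suc (floor_sqrt n)) ^ 2) \<longlonglongrightarrow> 1"
    using filterlim_compose[OF _ floor_sqrt_tendsto_top] by blast
  show "eventually (\<lambda>n. real (floor_sqrt n) ^ 2 / real (Suc (floor_sqrt n)) ^ 2
          \<le> real ((floor_sqrt n)^2) / real n) sequentially"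
  proof (rule eventually_sequentiallyI[of 1])
    fix n :: nat assume "1 \<le> n"
    moreover have "real n \<le> real (Suc (floor_sqrt n)) ^ 2"
      using Suc_floor_sqrt_power2_gt[of n] by (metis less_imp_le of_nat_le_iff of_nat_power)
    ultimately show "real (floor_sqrt n) ^ 2 / real (Suc (floor_sqrt n)) ^ 2
          \<le> real ((floor_sqrt n)^2) / real n"
      unfolding of_nat_power by (intro divide_left_mono) auto
  qed
  show "eventually (\<lambda>n. real ((floor_sqrt n)^2) / real n \<le> 1) sequentially"
  proof (rule always_eventually, rule allI)
    fix n
    have "real ((floor_sqrt n)^2) \<le> real n" using floor_sqrt_power2_le[of n] of_nat_le_iff by blast
    thus "real ((floor_sqrt n)^2) / real n \<le> 1" by (cases "n = 0") simp_all
  qed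
qed

lemma floor_sqrt_square_ratio_above: "(\<lambda>n. real ((Suc (floor_sqrt n))^2) / real n) \<longlonglongrightarrow> 1"
proof (rule tendsto_sandwich[OF _ _ tendsto_const])
  have "(\<lambda>m. real (Suc m) ^ 2 / real m ^ 2) \<longlonglongrightarrow> 1" by real_asymp
  thus "(\<lambda>n. real (Suc (floor_sqrt n)) ^ 2 / real (floor_sqrt n) ^ 2) \<longlonglongrightarrow> 1"
    using filterlim_compose[OF _ floor_sqrt_tendsto_top] by blast
  show "eventually (\<lambda>n. 1 \<le> real ((Suc (floor_sqrt n))^2) / real n) sequentially"
  proof (rule eventually_sequentiallyI[of 1])
    fix n :: nat assume "1 \<le> n"
    moreover have "real n \<le> real ((Suc (floor_sqrt n))^2)"
      using Suc_floor_sqrt_power2_gt[of n] by linarith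
    ultimately show "1 \<le> real ((Suc (floor_sqrt n))^2) / real n" by simp
  qed
  show "eventually (\<lambda>n. real ((Suc (floor_sqrt n))^2) / real n
          \<le> real (Suc (floor_sqrt n)) ^ 2 / real (floor_sqrt n) ^ 2) sequentially"
  proof (rule eventually_sequentiallyI[of 1])
    fix n :: nat assume "1 \<le> n"
    moreover have "real (floor_sqrt n ^ 2) \<le> real n"
      using floor_sqrt_power2_le[of n] of_nat_le_iff by blast
    ultimately show "real ((Suc (floor_sqrt n))^2) / real n
          \<le> real (Suc (floor_sqrt n)) ^ 2 / real (floor_sqrt n) ^ 2"
      unfolding of_nat_power by (intro divide_left_mono) auto
  qed
qed

lemma limit_from_squares_mono:
  fixes S :: "nat \<Rightarrow> real"
  assumes mono: "\<And>m n. m \<le> n \<Longrightarrow> S m \<le> S n"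
    and squares: "(\<lambda>m. S ((Suc m)^2) / real ((Suc m)^2)) \<longlonglongrightarrow> \<mu>"
  shows "(\<lambda>n. S n / real n) \<longlonglongrightarrow> \<mu>"
proof -
  define g where "g m = S ((Suc m)^2) / real ((Suc m)^2)" for m
  have lower: "(\<lambda>n. g (floor_sqrt n - 1) * (real ((floor_sqrt n)^2) / real n)) \<longlonglongrightarrow> \<mu>"
    using tendsto_mult[OF filterlim_compose[OF squares[folded g_def] floor_sqrt_pred_tendsto_top]
                          floor_sqrt_square_ratio_below] by simp
  have upper: "(\<lambda>n. g (floor_sqrt n) * (real ((Suc (floor_sqrt n))^2) / real n)) \<longlonglongrightarrow> \<mu>"
    using tendsto_mult[OF filterlim_compose[OF squares[folded g_def] floor_sqrt_tendsto_top]
                          floor_sqrt_square_ratio_above] by simp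
  show ?thesis
  proof (rule tendsto_sandwich[OF _ _ lower upper])
    show "eventually (\<lambda>n. g (floor_sqrt n - 1) * (real ((floor_sqrt n)^2) / real n) \<le> S n / real n)
            sequentially"
    proof (rule eventually_sequentiallyI[of 1])
      fix n :: nat assume n: "1 \<le> n"
      hence "Suc (floor_sqrt n - 1) = floor_sqrt n" "0 < (floor_sqrt n)^2" by (simp_all add: Suc_le_eq)
      hence "g (floor_sqrt n - 1) * (real ((floor_sqrt n)^2) / real n) = S ((floor_sqrt n)^2) / real n"
        unfolding g_def by simp
      also have "\<dots> \<le> S n / real n"
        using mono[OF floor_sqrt_power2_le[of n]] by (simp add: divide_right_mono)
      finally show "g (floor_sqrt n - 1) * (real ((floor_sqrt n)^2) / real n) \<le> S n / real n" .
    qed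
    show "eventually (\<lambda>n. S n / real n \<le> g (floor_sqrt n) * (real ((Suc (floor_sqrt n))^2) / real n))
            sequentially"
    proof (rule always_eventually, rule allI)
      fix n
      have "S n \<le> S ((Suc (floor_sqrt n))^2)"
        using Suc_floor_sqrt_power2_gt[of n] by (intro mono) simp
      thus "S n / real n \<le> g (floor_sqrt n) * (real ((Suc (floor_sqrt n))^2) / real n)"
        unfolding g_def by (simp add: divide_right_mono del: of_nat_power)
    qed
  qed
qed

lemma tendsto_zero_by_inverse_bounds:
  fixes a :: "nat \<Rightarrow> real"
  assumes "\<And>r. eventually (\<lambda>m. \<bar>a m\<bar> < 1 / real (Suc r)) sequentially"
  shows "a \<longlonglongrightarrow> 0"
proof (rule LIMSEQ_I)
  fix e :: real assume "0 < e"
  then obtain r where r: "r > 0" "inverse (real r) < e"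
    using ex_inverse_of_nat_less by blast
  have r_Suc: "1 / real (Suc r) \<le> inverse (real r)"
    using r by (simp add: inverse_eq_divide frac_le)
  have "eventually (\<lambda>m. norm (a m - 0) < e) sequentially"
    using assms[of r] by eventually_elim (use r r_Suc in simp)
  thus "\<exists>m0. \<forall>m\<ge>m0. norm (a m - 0) < e"
    by (simp add: eventually_sequentially)
qed

section \<open>Renewal counting\<close>

(* Nonnegative waiting times with positive average have unbounded partial sums, so the clock
   rings only finitely often before any given time. *)
lemma partial_sums_unbounded:
  fixes T :: "nat \<Rightarrow> real"
  assumes T0: "\<And>i. 0 \<le> T i"
    and avg: "(\<lambda>n. (\<Sum>i<n. T i) / real n) \<longlonglongrightarrow> \<mu>" and mu: "\<mu> > 0"
  shows "\<exists>n. t < (\<Sum>i\<le>n. T i)"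
proof -
  have "filterlim (\<lambda>n. (\<Sum>i<n. T i) / real n * real n) at_top sequentially"
    by (rule filterlim_tendsto_pos_mult_at_top[OF avg mu filterlim_real_sequentially])
  moreover have "(\<Sum>i<n. T i) / real n * real n = (\<Sum>i<n. T i)" for n
    by (cases n) auto
  ultimately have "\<forall>\<^sub>F n in sequentially. t < (\<Sum>i<n. T i)"
    by (simp add: filterlim_at_top_dense)
  then obtain n where "t < (\<Sum>i<n. T i)"
    by (meson eventually_sequentially order_refl)
  also have "\<dots> \<le> (\<Sum>i\<le>n. T i)"
    using T0 by (intro sum_mono2) auto
  finally show ?thesis ..
qed

lemma num_rings_less_iff:
  fixes T :: "nat \<Rightarrow> real"
  assumes T0: "\<And>i. 0 \<le> T i" and unbounded: "\<exists>n. t < (\<Sum>i\<le>n. T i)"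
  shows "n < num_rings T t \<longleftrightarrow> (\<Sum>i\<le>n. T i) \<le> t"
proof -
  define P where "P n = (\<Sum>i\<le>n. T i)" for n
  have mono: "P m \<le> P n" if "m \<le> n" for m n
    unfolding P_def using that T0 by (intro sum_mono2) auto
  define N where "N = (LEAST n. t < P n)"
  have tN: "t < P N"
    unfolding N_def using unbounded unfolding P_def by (rule LeastI_ex)
  have below: "{n. P n \<le> t} = {..<N}"
  proof safe
    fix n assume "P n \<le> t"
    show "n < N"
    proof (rule ccontr)
      assume "\<not> n < N"
      hence "P N \<le> P n" by (intro mono) simp
      thus False using tN \<open>P n \<le> t\<close> by simp
    qed
  next
    fix n assume "n < N"
    thus "P n \<le> t" unfolding N_def using not_less_Least by fastforce
  qed
  hence "num_rings T t = N"
    unfolding num_rings_def P_def[symmetric] by simp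
  with below show ?thesis
    unfolding P_def by blast
qed

lemma num_rings_tendsto_top:
  fixes T :: "nat \<Rightarrow> real"
  assumes T0: "\<And>i. 0 \<le> T i" and unbounded: "\<And>t. \<exists>n. t < (\<Sum>i\<le>n. T i)"
  shows "filterlim (num_rings T) at_top at_top"
  unfolding filterlim_at_top
proof
  fix Z :: nat
  show "eventually (\<lambda>t. Z \<le> num_rings T t) at_top"
  proof (rule eventually_at_top_linorderI[of "\<Sum>i\<le>Z. T i"])
    fix t assume "(\<Sum>i\<le>Z. T i) \<le> t"
    thus "Z \<le> num_rings T t"
      using num_rings_less_iff[OF T0 unbounded] by (simp add: less_imp_le)
  qed
qed

lemma num_rings_bracket:
  fixes T :: "nat \<Rightarrow> real"
  assumes T0: "\<And>i. 0 \<le> T i" and unbounded: "\<exists>n. t < (\<Sum>i\<le>n. T i)"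
  shows "t < (\<Sum>i<Suc (num_rings T t). T i)"
    and "0 < num_rings T t \<Longrightarrow> (\<Sum>i<num_rings T t. T i) \<le> t"
proof -
  note less_iff = num_rings_less_iff[OF T0 unbounded]
  show "t < (\<Sum>i<Suc (num_rings T t). T i)"
    using less_iff[of "num_rings T t"] by (simp add: lessThan_Suc_atMost)
  assume "0 < num_rings T t"
  then obtain k where "num_rings T t = Suc k" by (cases "num_rings T t") auto
  thus "(\<Sum>i<num_rings T t. T i) \<le> t"
    using less_iff[of k] by (simp add: lessThan_Suc_atMost)
qed

lemma renewal_time_ratio:
  fixes T :: "nat \<Rightarrow> real"
  assumes T0: "\<And>i. 0 \<le> T i"
    and avg: "(\<lambda>n. (\<Sum>i<n. T i) / real n) \<longlonglongrightarrow> \<mu>" and mu: "\<mu> > 0"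
  shows "((\<lambda>t. t / real (num_rings T t)) \<longlongrightarrow> \<mu>) at_top"
proof -
  define N where "N = num_rings T"
  have unbounded: "\<And>t. \<exists>n. t < (\<Sum>i\<le>n. T i)"
    by (rule partial_sums_unbounded[OF T0 avg mu])
  note bracket = num_rings_bracket[OF T0 unbounded, folded N_def]
  have N_top: "filterlim N at_top at_top"
    unfolding N_def by (rule num_rings_tendsto_top[OF T0 unbounded])
  have succ_ratio: "(\<lambda>n. real (Suc n) / real n) \<longlonglongrightarrow> 1"
    by real_asymp
  have lower: "((\<lambda>t. (\<Sum>i<N t. T i) / real (N t)) \<longlongrightarrow> \<mu>) at_top"
    using filterlim_compose[OF avg N_top] .
  have upper: "((\<lambda>t. (\<Sum>i<Suc (N t). T i) / real (Suc (N t)) * (real (Suc (N t)) / real (N t)))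
                 \<longlongrightarrow> \<mu>) at_top"
    using tendsto_mult[OF filterlim_compose[OF LIMSEQ_Suc[OF avg] N_top]
                          filterlim_compose[OF succ_ratio N_top]] by simp
  show ?thesis
    unfolding N_def[symmetric]
  proof (rule tendsto_sandwich[OF _ _ lower upper])
    have "eventually (\<lambda>t. 1 \<le> N t) at_top"
      using N_top by (simp add: filterlim_at_top)
    thus "eventually (\<lambda>t. (\<Sum>i<N t. T i) / real (N t) \<le> t / real (N t)) at_top"
      by eventually_elim (simp add: bracket(2) divide_right_mono)
    show "eventually (\<lambda>t. t / real (N t)
            \<le> (\<Sum>i<Suc (N t). T i) / real (Suc (N t)) * (real (Suc (N t)) / real (N t))) at_top"
      using bracket(1) by (intro always_eventually allI) (simp add: divide_right_mono less_imp_le del: of_nat_Suc)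
  qed
qed

lemma renewal_limit:
  fixes T :: "nat \<Rightarrow> real" and a :: "nat \<Rightarrow> real"
  assumes T0: "\<And>i. 0 \<le> T i"
    and avg: "(\<lambda>n. (\<Sum>i<n. T i) / real n) \<longlonglongrightarrow> \<mu>" and mu: "\<mu> > 0"
    and speed: "(\<lambda>n. a n / real n) \<longlonglongrightarrow> v"
  shows "((\<lambda>t. a (num_rings T t) / t) \<longlongrightarrow> v / \<mu>) at_top"
proof -
  define N where "N = num_rings T"
  have N_top: "filterlim N at_top at_top"
    unfolding N_def by (rule num_rings_tendsto_top[OF T0 partial_sums_unbounded[OF T0 avg mu]])
  have "((\<lambda>t. real (N t) / t) \<longlongrightarrow> 1 / \<mu>) at_top"
    using tendsto_inverse[OF renewal_time_ratio[OF T0 avg mu, folded N_def]] mu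
    by (simp add: inverse_eq_divide)
  hence "((\<lambda>t. a (N t) / real (N t) * (real (N t) / t)) \<longlongrightarrow> v * (1 / \<mu>)) at_top"
    by (intro tendsto_mult filterlim_compose[OF speed N_top])
  moreover have "eventually (\<lambda>t. 1 \<le> N t) at_top"
    using N_top by (simp add: filterlim_at_top)
  hence "eventually (\<lambda>t. a (N t) / real (N t) * (real (N t) / t) = a (N t) / t) at_top"
    by eventually_elim simp
  ultimately show ?thesis
    unfolding N_def by (simp add: Lim_transform_eventually)
qed

section \<open>A strong law of large numbers for orthogonal sequences\<close>

lemma summable_const_over_Suc_square: "summable (\<lambda>m. c / real (Suc m) ^ 2)"
proof -
  have "summable (\<lambda>n. inverse (real n ^ 2))" by (rule inverse_power_summable) simp
  hence "summable (\<lambda>m. inverse (real (Suc m) ^ 2))" by (subst summable_Suc_iff)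
  hence "summable (\<lambda>m. c * inverse (real (Suc m) ^ 2))" by (rule summable_mult)
  thus ?thesis by (simp add: divide_inverse)
qed

lemma (in prob_space) second_moment_orthogonal_sum:
  fixes Z :: "nat \<Rightarrow> 'a \<Rightarrow> real"
  assumes int: "\<And>j k. integrable M (\<lambda>\<omega>. Z j \<omega> * Z k \<omega>)"
    and orth: "\<And>j k. j \<noteq> k \<Longrightarrow> expectation (\<lambda>\<omega>. Z j \<omega> * Z k \<omega>) = 0"
    and bnd: "\<And>k. expectation (\<lambda>\<omega>. Z k \<omega> * Z k \<omega>) \<le> C"
  shows "integrable M (\<lambda>\<omega>. (\<Sum>k<n. Z k \<omega>)^2)"
    and "expectation (\<lambda>\<omega>. (\<Sum>k<n. Z k \<omega>)^2) \<le> real n * C"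
proof -
  have square: "(\<Sum>k<n. Z k \<omega>)^2 = (\<Sum>j<n. \<Sum>k<n. Z j \<omega> * Z k \<omega>)" for \<omega>
    by (simp add: power2_eq_square sum_product)
  show "integrable M (\<lambda>\<omega>. (\<Sum>k<n. Z k \<omega>)^2)"
    unfolding square by (simp add: int)
  have diagonal: "(\<Sum>k<n. expectation (\<lambda>\<omega>. Z j \<omega> * Z k \<omega>)) = expectation (\<lambda>\<omega>. Z j \<omega> * Z j \<omega>)"
    if "j < n" for j
  proof -
    have "(\<Sum>k<n. expectation (\<lambda>\<omega>. Z j \<omega> * Z k \<omega>))
        = (\<Sum>k<n. if k = j then expectation (\<lambda>\<omega>. Z j \<omega> * Z j \<omega>) else 0)"
      using orth by (intro sum.cong) auto
    thus ?thesis using that by simp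
  qed
  have "expectation (\<lambda>\<omega>. (\<Sum>k<n. Z k \<omega>)^2) = (\<Sum>j<n. \<Sum>k<n. expectation (\<lambda>\<omega>. Z j \<omega> * Z k \<omega>))"
    unfolding square using int by (simp add: integrable_sum)
  also have "\<dots> = (\<Sum>j<n. expectation (\<lambda>\<omega>. Z j \<omega> * Z j \<omega>))"
    using diagonal by (intro sum.cong) auto
  also have "\<dots> \<le> real n * C"
    using sum_mono[of "{..<n}" "\<lambda>j. expectation (\<lambda>\<omega>. Z j \<omega> * Z j \<omega>)" "\<lambda>_. C"] bnd by simp
  finally show "expectation (\<lambda>\<omega>. (\<Sum>k<n. Z k \<omega>)^2) \<le> real n * C" .
qed

lemma (in prob_space) orthogonal_sum_deviation:
  fixes Z :: "nat \<Rightarrow> 'a \<Rightarrow> real"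
  assumes [measurable]: "\<And>k. Z k \<in> borel_measurable M"
    and int: "\<And>j k. integrable M (\<lambda>\<omega>. Z j \<omega> * Z k \<omega>)"
    and orth: "\<And>j k. j \<noteq> k \<Longrightarrow> expectation (\<lambda>\<omega>. Z j \<omega> * Z k \<omega>) = 0"
    and bnd: "\<And>k. expectation (\<lambda>\<omega>. Z k \<omega> * Z k \<omega>) \<le> C"
    and a: "a > 0"
  shows "prob {\<omega> \<in> space M. a \<le> \<bar>\<Sum>k<n. Z k \<omega>\<bar>} \<le> real n * C / a^2"
proof -
  note moments = second_moment_orthogonal_sum[where Z = Z and C = C and n = n, OF int orth bnd]
  have "prob {\<omega> \<in> space M. a \<le> \<bar>\<Sum>k<n. Z k \<omega>\<bar>} \<le> expectation (\<lambda>\<omega>. (\<Sum>k<n. Z k \<omega>)^2) / a^2"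
    by (rule second_moment_method) (use moments(1) a in auto)
  also have "\<dots> \<le> real n * C / a^2"
    by (rule divide_right_mono[OF moments(2)]) simp_all
  finally show ?thesis .
qed

(* Borel-Cantelli along the squares: the deviation probabilities are O(1/m^2), hence summable. *)
lemma (in prob_space) orthogonal_squares_eventually_small:
  fixes Z :: "nat \<Rightarrow> 'a \<Rightarrow> real"
  assumes meas[measurable]: "\<And>k. Z k \<in> borel_measurable M"
    and int: "\<And>j k. integrable M (\<lambda>\<omega>. Z j \<omega> * Z k \<omega>)"
    and orth: "\<And>j k. j \<noteq> k \<Longrightarrow> expectation (\<lambda>\<omega>. Z j \<omega> * Z k \<omega>) = 0"
    and bnd: "\<And>k. expectation (\<lambda>\<omega>. Z k \<omega> * Z k \<omega>) \<le> C"
  shows "AE \<omega> in M. eventually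
           (\<lambda>m. \<bar>\<Sum>k<(Suc m)^2. Z k \<omega>\<bar> / real ((Suc m)^2) < 1 / real (Suc r)) sequentially"
proof -
  define A where "A m = {\<omega> \<in> space M. real ((Suc m)^2) / real (Suc r) \<le> \<bar>\<Sum>k<(Suc m)^2. Z k \<omega>\<bar>}" for m
  have A_sets[measurable]: "A m \<in> sets M" for m unfolding A_def by measurable
  have A_prob: "measure M (A m) \<le> C * real (Suc r) ^ 2 / real (Suc m) ^ 2" for m
  proof -
    have "measure M (A m) \<le> real ((Suc m)^2) * C / (real ((Suc m)^2) / real (Suc r))^2"
      unfolding A_def by (rule orthogonal_sum_deviation[OF meas int orth bnd]) (simp_all add: zero_less_divide_iff)
    also have "\<dots> = C * real (Suc r) ^ 2 / real (Suc m) ^ 2"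
    proof -
      have "x * C / (x / R)^2 = C * R^2 / x" if "x > 0" "R \<noteq> 0" for x R :: real
        using that by (simp add: field_simps power2_eq_square)
      thus ?thesis by (simp del: of_nat_Suc)
    qed
    finally show ?thesis .
  qed
  have "AE \<omega> in M. eventually (\<lambda>m. \<omega> \<in> space M - A m) sequentially"
  proof (rule borel_cantelli_AE1)
    show "emeasure M (A m) < \<infinity>" for m by (simp add: emeasure_eq_measure)
    show "summable (\<lambda>m. measure M (A m))"
      by (rule summable_comparison_test'[OF summable_const_over_Suc_square[of "C * real (Suc r) ^ 2"], of 0])
         (use A_prob in auto)
  qed simp
  thus ?thesis
    by (rule AE_mp, intro AE_I2 impI) (auto simp: A_def field_simps elim!: eventually_mono simp del: of_nat_Suc of_nat_power)
qed

lemma (in prob_space) orthogonal_slln_squares: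
  fixes Z :: "nat \<Rightarrow> 'a \<Rightarrow> real"
  assumes meas[measurable]: "\<And>k. Z k \<in> borel_measurable M"
    and int: "\<And>j k. integrable M (\<lambda>\<omega>. Z j \<omega> * Z k \<omega>)"
    and orth: "\<And>j k. j \<noteq> k \<Longrightarrow> expectation (\<lambda>\<omega>. Z j \<omega> * Z k \<omega>) = 0"
    and bnd: "\<And>k. expectation (\<lambda>\<omega>. Z k \<omega> * Z k \<omega>) \<le> C"
  shows "AE \<omega> in M. (\<lambda>m. (\<Sum>k<(Suc m)^2. Z k \<omega>) / real ((Suc m)^2)) \<longlonglongrightarrow> 0"
proof -
  have "AE \<omega> in M. \<forall>r. eventually
          (\<lambda>m. \<bar>\<Sum>k<(Suc m)^2. Z k \<omega>\<bar> / real ((Suc m)^2) < 1 / real (Suc r)) sequentially"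
    unfolding AE_all_countable by (intro allI orthogonal_squares_eventually_small[OF meas int orth bnd])
  thus ?thesis
    by (rule AE_mp, intro AE_I2 impI tendsto_zero_by_inverse_bounds) (simp add: abs_divide)
qed

lemma (in prob_space) indep_sets_reindex:
  assumes indep: "indep_sets F (f ` I)" and inj: "inj_on f I"
  shows "indep_sets (\<lambda>i. F (f i)) I"
  unfolding indep_sets_def
proof (intro conjI ballI allI impI)
  fix i assume "i \<in> I"
  thus "F (f i) \<subseteq> events" using indep by (auto simp: indep_sets_def)
next
  fix J A assume J: "J \<subseteq> I" "J \<noteq> {}" "finite J" and A: "A \<in> Pi J (\<lambda>i. F (f i))"
  define A' where "A' y = A (the_inv_into J f y)" for y
  have injJ: "inj_on f J" using inj J(1) by (rule inj_on_subset)
  have A'f: "A' (f j) = A j" if "j \<in> J" for j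
    unfolding A'_def using the_inv_into_f_f[OF injJ that] by simp
  have "prob (\<Inter>y\<in>f ` J. A' y) = (\<Prod>y\<in>f ` J. prob (A' y))"
  proof -
    have "f ` J \<subseteq> f ` I" using J by auto
    moreover have "A' \<in> Pi (f ` J) F" using A A'f by auto
    ultimately show ?thesis using indep J unfolding indep_sets_def by (metis finite_imageI image_is_empty)
  qed
  moreover have "(\<Inter>y\<in>f ` J. A' y) = (\<Inter>j\<in>J. A j)" using A'f by auto
  moreover have "(\<Prod>y\<in>f ` J. prob (A' y)) = (\<Prod>j\<in>J. prob (A j))"
    using prod.reindex[OF injJ, of "\<lambda>y. prob (A' y)"] A'f by simp
  ultimately show "prob (\<Inter>j\<in>J. A j) = (\<Prod>j\<in>J. prob (A j))" by simp
qed

lemma (in prob_space) indep_vars_of_joint: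
  fixes T :: "nat \<Rightarrow> 'a \<Rightarrow> real" and \<xi> :: "nat \<Rightarrow> 'a \<Rightarrow> 'b"
  assumes indep: "indep_sets
          (\<lambda>i. case i of
                  Inl n \<Rightarrow> {T n -` A \<inter> space M | A. A \<in> sets (borel :: real measure)}
                | Inr n \<Rightarrow> {\<xi> n -` A \<inter> space M | A. A \<in> sets (count_space UNIV)})
          (UNIV :: (nat + nat) set)"
    and T_meas: "\<And>n. T n \<in> borel_measurable M"
    and \<xi>_meas: "\<And>n. \<xi> n \<in> measurable M (count_space UNIV)"
  shows "indep_vars (\<lambda>_. borel) T UNIV" and "indep_vars (\<lambda>_. count_space UNIV) \<xi> UNIV"
proof -
  have "indep_sets (\<lambda>n. {T n -` A \<inter> space M | A. A \<in> sets borel}) UNIV"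
    using indep_sets_reindex[OF indep_sets_mono_index[OF _ indep], of Inl UNIV] by simp
  thus "indep_vars (\<lambda>_. borel) T UNIV"
    unfolding indep_vars_def2 using T_meas by simp
  have "indep_sets (\<lambda>n. {\<xi> n -` A \<inter> space M | A. A \<in> sets (count_space UNIV)}) UNIV"
    using indep_sets_reindex[OF indep_sets_mono_index[OF _ indep], of Inr UNIV] by simp
  thus "indep_vars (\<lambda>_. count_space UNIV) \<xi> UNIV"
    unfolding indep_vars_def2 using \<xi>_meas by simp
qed

lemma (in prob_space) indep_var_pair:
  assumes indep: "indep_vars (\<lambda>_. N) X UNIV" and "j \<noteq> k"
  shows "indep_var N (X j) N (X k)"
proof -
  have "indep_var N ((\<lambda>f. f j) \<circ> (\<lambda>\<omega>. restrict (\<lambda>i. X i \<omega>) {j}))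
                  N ((\<lambda>f. f k) \<circ> (\<lambda>\<omega>. restrict (\<lambda>i. X i \<omega>) {k}))"
    using \<open>j \<noteq> k\<close> by (intro indep_var_compose[OF indep_var_restrict[OF indep]])
                          (auto intro: measurable_component_singleton)
  thus ?thesis by (simp add: comp_def)
qed

lemma map_upt_measurable:
  "k \<le> n \<Longrightarrow> (\<lambda>f. map f [0..<k])
     \<in> measurable (Pi\<^sub>M {..<n} (\<lambda>_. count_space (UNIV :: 'b :: countable set))) (count_space UNIV)"
proof (induction k)
  case (Suc k)
  have "(\<lambda>f. (\<lambda>l x. l @ [x k]) (map f [0..<k]) f)
          \<in> measurable (Pi\<^sub>M {..<n} (\<lambda>_. count_space (UNIV :: 'b set))) (count_space UNIV)"
  proof (rule measurable_compose_countable'[where f="\<lambda>l x. l @ [x k]" and g="\<lambda>f. map f [0..<k]" and I=UNIV])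
    show "(\<lambda>x. l @ [x k]) \<in> measurable (Pi\<^sub>M {..<n} (\<lambda>_. count_space UNIV)) (count_space UNIV)"
      for l :: "'b list"
      using Suc.prems by (intro measurable_compose[OF measurable_component_singleton]) auto
  qed (use Suc in simp_all)
  thus ?case by simp
qed simp

lemma (in prob_space) indep_var_prefix:
  fixes X :: "nat \<Rightarrow> 'a \<Rightarrow> 'b :: countable"
  assumes indep: "indep_vars (\<lambda>_. count_space UNIV) X UNIV"
  shows "indep_var (count_space UNIV) (\<lambda>\<omega>. map (\<lambda>i. X i \<omega>) [0..<k])
                   (count_space UNIV) (\<lambda>\<omega>. [X k \<omega>])"
proof -
  have "indep_var (count_space UNIV) ((\<lambda>f. map f [0..<k]) \<circ> (\<lambda>\<omega>. restrict (\<lambda>i. X i \<omega>) {..<k}))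
                  (count_space UNIV) ((\<lambda>f. [f k]) \<circ> (\<lambda>\<omega>. restrict (\<lambda>i. X i \<omega>) {k}))"
    by (intro indep_var_compose[OF indep_var_restrict[OF indep]])
       (auto intro: map_upt_measurable measurable_compose[OF measurable_component_singleton])
  moreover have "(\<lambda>f. map f [0..<k]) \<circ> (\<lambda>\<omega>. restrict (\<lambda>i. X i \<omega>) {..<k}) = (\<lambda>\<omega>. map (\<lambda>i. X i \<omega>) [0..<k])"
    by (auto simp: fun_eq_iff)
  ultimately show ?thesis by (simp add: comp_def)
qed

lemma (in prob_space) indep_expectation_zero:
  fixes L :: "'a \<Rightarrow> 'y :: finite list" and Y :: "'a \<Rightarrow> 'y" and F :: "'y list \<Rightarrow> 'y \<Rightarrow> real"
  assumes indep: "indep_var (count_space UNIV) L (count_space UNIV) (\<lambda>\<omega>. [Y \<omega>])"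
    and bnd: "\<And>l y. \<bar>F l y\<bar> \<le> B"
    and law: "\<And>y. prob {\<omega> \<in> space M. Y \<omega> = y} = \<pi> y"
    and centered: "\<And>l. (\<Sum>y\<in>UNIV. \<pi> y * F l y) = 0"
  shows "expectation (\<lambda>\<omega>. F (L \<omega>) (Y \<omega>)) = 0"
proof -
  define I where "I y \<omega> = (indicator {[y]} [Y \<omega>] :: real)" for y \<omega>
  have L_meas: "L \<in> measurable M (count_space UNIV)" using indep_var_rv1[OF indep] .
  have Y_meas: "(\<lambda>\<omega>. [Y \<omega>]) \<in> measurable M (count_space UNIV)" using indep_var_rv2[OF indep] .
  have F_meas: "(\<lambda>\<omega>. F (L \<omega>) y) \<in> borel_measurable M" for y
    by (rule measurable_compose[OF L_meas]) simp
  have F_int: "integrable M (\<lambda>\<omega>. F (L \<omega>) y)" for y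
    by (rule integrable_const_bound[of _ B]) (use bnd F_meas in auto)
  have I_meas: "I y \<in> borel_measurable M" for y
    unfolding I_def by (rule measurable_compose[OF Y_meas]) simp
  have I_int: "integrable M (I y)" for y
    by (rule integrable_const_bound[of _ 1]) (use I_meas in \<open>auto simp: I_def\<close>)
  have FI_indep: "indep_var borel (\<lambda>\<omega>. F (L \<omega>) y) borel (I y)" for y
    using indep_var_compose[OF indep, of "\<lambda>l. F l y" borel "indicator {[y]}" borel]
    by (simp add: comp_def I_def[abs_def])
  have I_exp: "expectation (I y) = \<pi> y" for y
  proof -
    have "expectation (I y) = expectation (indicator {\<omega> \<in> space M. Y \<omega> = y})"
      by (rule Bochner_Integration.integral_cong) (auto simp: I_def indicator_def)
    also have "\<dots> = prob {\<omega> \<in> space M. Y \<omega> = y}"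
      by (simp add: Int_absorb2 subset_iff)
    finally show ?thesis using law by simp
  qed
  have split: "F (L \<omega>) (Y \<omega>) = (\<Sum>y\<in>UNIV. F (L \<omega>) y * I y \<omega>)" for \<omega>
    by (simp add: I_def indicator_def if_distrib cong: if_cong)
  have "expectation (\<lambda>\<omega>. F (L \<omega>) (Y \<omega>)) = (\<Sum>y\<in>UNIV. expectation (\<lambda>\<omega>. F (L \<omega>) y * I y \<omega>))"
    unfolding split
    by (rule Bochner_Integration.integral_sum) (use indep_var_integrable[OF FI_indep F_int I_int] in auto)
  also have "\<dots> = (\<Sum>y\<in>UNIV. \<pi> y * expectation (\<lambda>\<omega>. F (L \<omega>) y))"
    using indep_var_lebesgue_integral[OF FI_indep F_int I_int] I_exp by (simp add: mult.commute)
  also have "\<dots> = expectation (\<lambda>\<omega>. \<Sum>y\<in>UNIV. \<pi> y * F (L \<omega>) y)"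
    using F_int by (simp add: Bochner_Integration.integral_sum)
  also have "\<dots> = 0" using centered by simp
  finally show ?thesis .
qed

lemma (in prob_space) pairwise_indep_centered_orthogonal:
  fixes T :: "nat \<Rightarrow> 'a \<Rightarrow> real"
  assumes meas[measurable]: "\<And>k. T k \<in> borel_measurable M"
    and indep: "\<And>j k. j \<noteq> k \<Longrightarrow> indep_var borel (T j) borel (T k)"
    and square_int: "\<And>k. integrable M (\<lambda>\<omega>. (T k \<omega>)^2)"
    and mean: "\<And>k. expectation (T k) = \<mu>"
  defines "Z k \<omega> \<equiv> T k \<omega> - \<mu>"
  shows "integrable M (\<lambda>\<omega>. Z j \<omega> * Z k \<omega>)"
    and "j \<noteq> k \<Longrightarrow> expectation (\<lambda>\<omega>. Z j \<omega> * Z k \<omega>) = 0"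
    and "expectation (\<lambda>\<omega>. Z k \<omega> * Z k \<omega>) = variance (T k)"
proof -
  have T_int: "integrable M (T k)" for k
    by (rule square_integrable_imp_integrable[OF meas square_int])
  have Z_int: "integrable M (Z k)" and Z_mean: "expectation (Z k) = 0" for k
    unfolding Z_def using T_int mean by (simp_all add: prob_space)
  have Z_square: "(\<lambda>\<omega>. Z k \<omega> * Z k \<omega>) = (\<lambda>\<omega>. (T k \<omega>)^2 - 2 * \<mu> * T k \<omega> + \<mu>^2)" for k
    by (auto simp: Z_def power2_eq_square algebra_simps)
  have Z_indep: "indep_var borel (Z j) borel (Z k)" if "j \<noteq> k" for j k
    using indep_var_compose[OF indep[OF that], of "\<lambda>x. x - \<mu>" borel "\<lambda>x. x - \<mu>" borel]
    by (simp add: comp_def Z_def[abs_def])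
  show "integrable M (\<lambda>\<omega>. Z j \<omega> * Z k \<omega>)"
    using Z_square T_int square_int indep_var_integrable[OF Z_indep Z_int Z_int] by (cases "j = k") auto
  show "j \<noteq> k \<Longrightarrow> expectation (\<lambda>\<omega>. Z j \<omega> * Z k \<omega>) = 0"
    using indep_var_lebesgue_integral[OF Z_indep Z_int Z_int] Z_mean by simp
  show "expectation (\<lambda>\<omega>. Z k \<omega> * Z k \<omega>) = variance (T k)"
    by (simp add: Z_def mean power2_eq_square)
qed

(* Strong law for nonnegative pairwise independent variables with common mean and bounded
   variance: orthogonality gives the limit along squares, monotonicity interpolates. *)
lemma (in prob_space) pairwise_indep_slln_nonneg:
  fixes T :: "nat \<Rightarrow> 'a \<Rightarrow> real"
  assumes meas[measurable]: "\<And>k. T k \<in> borel_measurable M"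
    and indep: "\<And>j k. j \<noteq> k \<Longrightarrow> indep_var borel (T j) borel (T k)"
    and square_int: "\<And>k. integrable M (\<lambda>\<omega>. (T k \<omega>)^2)"
    and mean: "\<And>k. expectation (T k) = \<mu>"
    and var: "\<And>k. variance (T k) \<le> C"
    and nonneg: "AE \<omega> in M. \<forall>n. 0 \<le> T n \<omega>"
  shows "AE \<omega> in M. (\<lambda>n. (\<Sum>i<n. T i \<omega>) / real n) \<longlonglongrightarrow> \<mu>"
proof -
  define Z where "Z k \<omega> = T k \<omega> - \<mu>" for k \<omega>
  have Z_meas: "Z k \<in> borel_measurable M" for k unfolding Z_def by measurable
  note centered = pairwise_indep_centered_orthogonal[where T = T and \<mu> = \<mu>, OF meas indep square_int mean]
  have "AE \<omega> in M. (\<lambda>m. (\<Sum>k<(Suc m)^2. Z k \<omega>) / real ((Suc m)^2)) \<longlonglongrightarrow> 0"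
    by (rule orthogonal_slln_squares[where Z = Z and C = C]) (use Z_meas centered var in \<open>simp_all add: Z_def mean\<close>)
  with nonneg show ?thesis
  proof eventually_elim
    case (elim \<omega>)
    have "(\<lambda>m. (\<Sum>k<(Suc m)^2. T k \<omega>) / real ((Suc m)^2))
        = (\<lambda>m. (\<Sum>k<(Suc m)^2. Z k \<omega>) / real ((Suc m)^2) + \<mu>)"
      by (simp add: Z_def sum_subtractf field_simps del: of_nat_Suc of_nat_power)
    moreover have "(\<lambda>m. (\<Sum>k<(Suc m)^2. Z k \<omega>) / real ((Suc m)^2) + \<mu>) \<longlonglongrightarrow> 0 + \<mu>"
      by (intro tendsto_add elim(2) tendsto_const)
    moreover have "(\<Sum>i<m. T i \<omega>) \<le> (\<Sum>i<n. T i \<omega>)" if "m \<le> n" for m n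
      using that elim(1) by (intro sum_mono2) auto
    ultimately show ?case
      by (intro limit_from_squares_mono[where S = "\<lambda>n. \<Sum>i<n. T i \<omega>"]) simp_all
  qed
qed

lemma (in prob_space) exponential_nonneg:
  fixes T :: "nat \<Rightarrow> 'a \<Rightarrow> real"
  assumes "\<And>n. distributed M lborel (T n) (exponential_density l)"
  shows "AE \<omega> in M. \<forall>n. 0 \<le> T n \<omega>"
proof (subst AE_all_countable, intro allI)
  fix n
  have "AE x in lborel. 0 < exponential_density l x \<longrightarrow> 0 \<le> x"
    by (simp add: exponential_density_def)
  thus "AE \<omega> in M. 0 \<le> T n \<omega>"
    by (subst distributed_AE2[OF assms]) simp_all
qed

lemma (in prob_space) exponential_slln:
  fixes T :: "nat \<Rightarrow> 'a \<Rightarrow> real"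
  assumes indep: "indep_vars (\<lambda>_. borel) T UNIV"
    and T_exp: "\<And>n. distributed M lborel (T n) (exponential_density l)" and l: "l > 0"
  shows "AE \<omega> in M. (\<lambda>n. (\<Sum>i<n. T i \<omega>) / real n) \<longlonglongrightarrow> 1 / l"
proof (rule pairwise_indep_slln_nonneg)
  show "T k \<in> borel_measurable M" for k
    using distributed_measurable[OF T_exp[of k]] by simp
  show "integrable M (\<lambda>\<omega>. (T k \<omega>)^2)" for k
    by (rule erlang_ith_moment_integrable[OF l T_exp])
  show "expectation (T k) = 1 / l" for k
    by (rule exponential_distributed_expectation[OF l T_exp])
  show "variance (T k) \<le> 1 / l^2" for k
    by (simp add: exponential_distributed_variance[OF l T_exp])
  show "AE \<omega> in M. \<forall>n. 0 \<le> T n \<omega>"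
    by (rule exponential_nonneg[OF T_exp])
qed (rule indep_var_pair[OF indep])

definition admissible :: "nat \<Rightarrow> int \<times> int \<Rightarrow> bool" where
  "admissible s c \<longleftrightarrow> 1 \<le> snd c - fst c \<and> snd c - fst c \<le> int s"

definition gap :: "int \<times> int \<Rightarrow> real" where
  "gap c = real_of_int (snd c - fst c)"

lemma admissible_step: "admissible s c \<Longrightarrow> admissible s (spider_step s c m)"
  unfolding admissible_def spider_step_def Let_def by (auto split: if_splits)

lemma admissible_chain: "admissible s c0 \<Longrightarrow> admissible s (spider_chain s c0 \<xi> n)"
  by (induction n) (simp_all add: admissible_step)

lemma spider_chain_foldl: "spider_chain s c0 \<xi> n = foldl (spider_step s) c0 (map \<xi> [0..<n])"
  by (induction n) auto

lemma first_leg_step_bound: "admissible s c \<Longrightarrow> \<bar>fst (spider_step s c m) - fst c\<bar> \<le> 1"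
  unfolding admissible_def spider_step_def Let_def by (auto split: if_splits)

section \<open>The corrector and the martingale decomposition\<close>

definition corr_profile :: "nat \<Rightarrow> real \<Rightarrow> real" where
  "corr_profile s g = (g - 1) * (g / real s - 2)"

(* The three identities below form a discrete
   Poisson equation for w: in the interior (p+q) times the second difference of w equals
   2(p+q)v - (p-q), and the boundary equations compensate for the suppressed moves at
   g = 1 and g = s. *)
definition corrector :: "nat \<Rightarrow> real \<Rightarrow> real \<Rightarrow> real \<Rightarrow> real" where
  "corrector s p q g = (q * corr_profile s (real s + 1 - g) - p * corr_profile s g) / (2 * (p + q))"

definition ring_speed :: "nat \<Rightarrow> real \<Rightarrow> real \<Rightarrow> real" where
  "ring_speed s p q = (p - q) * (1 - 1 / real s) / (2 * (p + q))"

lemma corrector_interior: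
  assumes "s \<ge> 2" "p + q > 0"
  shows "(p + q) * (corrector s p q (x + 1) + corrector s p q (x - 1) - 2 * corrector s p q x)
           = 2 * (p + q) * ring_speed s p q - (p - q)"
proof -
  define t where "t = p + q"
  have "real s \<noteq> 0" "t \<noteq> 0" and p: "p = t - q" using assms by (auto simp: t_def)
  thus ?thesis unfolding corrector_def corr_profile_def ring_speed_def p by (simp add: field_simps)
qed

lemma corrector_lower:
  assumes "s \<ge> 2" "p + q > 0"
  shows "(p + q) * (corrector s p q 2 - corrector s p q 1) = 2 * (p + q) * ring_speed s p q + q"
proof -
  define t where "t = p + q"
  have "real s \<noteq> 0" "t \<noteq> 0" and p: "p = t - q" using assms by (auto simp: t_def)
  thus ?thesis unfolding corrector_def corr_profile_def ring_speed_def p by (simp add: field_simps)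
qed

lemma corrector_upper:
  assumes "s \<ge> 2" "p + q > 0"
  shows "(p + q) * (corrector s p q (real s - 1) - corrector s p q (real s))
           = 2 * (p + q) * ring_speed s p q - p"
proof -
  define t where "t = p + q"
  have "real s \<noteq> 0" "t \<noteq> 0" and p: "p = t - q" using assms by (auto simp: t_def)
  thus ?thesis unfolding corrector_def corr_profile_def ring_speed_def p by (simp add: field_simps)
qed

definition centered_increment :: "nat \<Rightarrow> real \<Rightarrow> real \<Rightarrow> int \<times> int \<Rightarrow> bool \<times> bool \<Rightarrow> real" where
  "centered_increment s p q c m =
     (if admissible s c then
        real_of_int (fst (spider_step s c m) - fst c) + corrector s p q (gap (spider_step s c m))
          - corrector s p q (gap c) - ring_speed s p q
      else 0)"

definition move_prob :: "real \<Rightarrow> real \<Rightarrow> bool \<times> bool \<Rightarrow> real" where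
  "move_prob p q m = (if snd m then p else q) / (2 * (p + q))"

lemma move_average:
  "(\<Sum>m\<in>UNIV. move_prob p q m * f m)
     = (p * (f (False, True) + f (True, True)) + q * (f (False, False) + f (True, False))) / (2 * (p + q))"
proof -
  have moves: "(UNIV :: (bool \<times> bool) set) = {(False, False), (False, True), (True, False), (True, True)}"
    by auto
  show ?thesis unfolding moves by (simp add: move_prob_def add_divide_distrib distrib_left)
qed

lemma balance_lower:
  fixes a :: int and p q :: real
  assumes "s \<ge> 2" "p + q > 0"
  defines "G \<equiv> centered_increment s p q (a, a + 1)"
  shows "p * (G (False, True) + G (True, True)) + q * (G (False, False) + G (True, False)) = 0"
proof -
  have "G (False, True) = - ring_speed s p q" "G (True, False) = - ring_speed s p q"
    "G (False, False) = -1 + corrector s p q 2 - corrector s p q 1 - ring_speed s p q"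
    "G (True, True) = corrector s p q 2 - corrector s p q 1 - ring_speed s p q"
    using assms(1) by (simp_all add: G_def centered_increment_def admissible_def spider_step_def gap_def)
  with corrector_lower[OF assms(1,2)] show ?thesis by algebra
qed

lemma balance_upper:
  fixes a :: int and p q :: real
  assumes "s \<ge> 2" "p + q > 0"
  defines "G \<equiv> centered_increment s p q (a, a + int s)"
  shows "p * (G (False, True) + G (True, True)) + q * (G (False, False) + G (True, False)) = 0"
proof -
  have "G (False, False) = - ring_speed s p q" "G (True, True) = - ring_speed s p q"
    "G (False, True) = 1 + corrector s p q (real s - 1) - corrector s p q (real s) - ring_speed s p q"
    "G (True, False) = corrector s p q (real s - 1) - corrector s p q (real s) - ring_speed s p q"
    using assms(1) by (simp_all add: G_def centered_increment_def admissible_def spider_step_def gap_def)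
  with corrector_upper[OF assms(1,2)] show ?thesis by algebra
qed

lemma balance_interior:
  fixes a g :: int and p q :: real
  assumes "s \<ge> 2" "p + q > 0" "2 \<le> g" "g + 1 \<le> int s"
  defines "G \<equiv> centered_increment s p q (a, a + g)" and "x \<equiv> real_of_int g"
  shows "p * (G (False, True) + G (True, True)) + q * (G (False, False) + G (True, False)) = 0"
proof -
  have "G (False, True) = 1 + corrector s p q (x - 1) - corrector s p q x - ring_speed s p q"
    "G (True, False) = corrector s p q (x - 1) - corrector s p q x - ring_speed s p q"
    "G (False, False) = -1 + corrector s p q (x + 1) - corrector s p q x - ring_speed s p q"
    "G (True, True) = corrector s p q (x + 1) - corrector s p q x - ring_speed s p q"
    using assms(3,4) by (simp_all add: G_def x_def centered_increment_def admissible_def spider_step_def gap_def)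
  with corrector_interior[OF assms(1,2), of x] show ?thesis by algebra
qed

lemma centered_increment_mean_zero:
  assumes "s \<ge> 2" "p > 0" "q > 0"
  shows "(\<Sum>m\<in>UNIV. move_prob p q m * centered_increment s p q c m) = 0"
proof (cases "admissible s c")
  case False thus ?thesis by (simp add: centered_increment_def)
next
  case True
  obtain a g where c: "c = (a, a + g)" and g: "1 \<le> g" "g \<le> int s"
    using True by (cases c) (auto simp: admissible_def intro!: that[of _ "snd c - fst c"])
  have pq: "p + q > 0" using assms by simp
  consider "g = 1" | "g = int s" | "2 \<le> g \<and> g + 1 \<le> int s" using g by linarith
  hence "p * (centered_increment s p q c (False, True) + centered_increment s p q c (True, True))
       + q * (centered_increment s p q c (False, False) + centered_increment s p q c (True, False)) = 0"
    by cases (use balance_lower[OF assms(1) pq] balance_upper[OF assms(1) pq]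
                  balance_interior[OF assms(1) pq] in \<open>auto simp: c\<close>)
  thus ?thesis by (simp add: move_average)
qed

lemma corr_profile_bound:
  assumes "1 \<le> g" "g \<le> real s"
  shows "\<bar>corr_profile s g\<bar> \<le> 2 * real s"
proof -
  have s: "real s > 0" using assms by simp
  have "\<bar>g / real s - 2\<bar> \<le> 2" using assms s by (simp add: abs_le_iff field_simps)
  hence "\<bar>g - 1\<bar> * \<bar>g / real s - 2\<bar> \<le> real s * 2"
    using assms by (intro mult_mono) auto
  thus ?thesis by (simp add: corr_profile_def abs_mult)
qed

lemma corrector_bound:
  assumes "admissible s c" "p > 0" "q > 0"
  shows "\<bar>corrector s p q (gap c)\<bar> \<le> real s"
proof -
  define g where "g = gap c"
  have g: "1 \<le> g" "g \<le> real s" using assms(1) by (auto simp: admissible_def g_def gap_def)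
  have "\<bar>q * corr_profile s (real s + 1 - g) - p * corr_profile s g\<bar>
          \<le> q * \<bar>corr_profile s (real s + 1 - g)\<bar> + p * \<bar>corr_profile s g\<bar>"
    using assms by (simp add: abs_mult abs_triangle_ineq4[THEN order_trans])
  also have "\<dots> \<le> q * (2 * real s) + p * (2 * real s)"
    using assms g by (intro add_mono mult_left_mono corr_profile_bound) auto
  finally show ?thesis
    using assms by (simp add: corrector_def g_def[symmetric] abs_divide divide_le_eq algebra_simps)
qed

definition increment_bound :: "nat \<Rightarrow> real \<Rightarrow> real \<Rightarrow> real" where
  "increment_bound s p q = 1 + 2 * real s + \<bar>ring_speed s p q\<bar>"

lemma centered_increment_bound:
  assumes "p > 0" "q > 0"
  shows "\<bar>centered_increment s p q c m\<bar> \<le> increment_bound s p q"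
proof (cases "admissible s c")
  case True
  thus ?thesis
    using first_leg_step_bound[OF True, of m] corrector_bound[OF True assms]
      corrector_bound[OF admissible_step[OF True] assms, of m]
    by (simp add: centered_increment_def increment_bound_def abs_le_iff) linarith
qed (simp add: centered_increment_def increment_bound_def)

lemma centered_increment_product_bound:
  assumes "p > 0" "q > 0"
  shows "\<bar>centered_increment s p q c m * centered_increment s p q c' m'\<bar> \<le> increment_bound s p q ^ 2"
proof -
  have "0 \<le> increment_bound s p q"
    using centered_increment_bound[OF assms] by (meson abs_ge_zero order_trans)
  thus ?thesis
    unfolding abs_mult power2_eq_square by (intro mult_mono centered_increment_bound[OF assms]) auto
qed

lemma centered_increments_telescope:
  assumes "admissible s c0"
  shows "(\<Sum>k<n. centered_increment s p q (spider_chain s c0 \<xi> k) (\<xi> k))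
           = real_of_int (fst (spider_chain s c0 \<xi> n)) - real_of_int (fst c0)
             + corrector s p q (gap (spider_chain s c0 \<xi> n)) - corrector s p q (gap c0)
             - real n * ring_speed s p q"
  by (induction n) (simp_all add: centered_increment_def admissible_chain[OF assms] algebra_simps)

(* Deterministic conclusion: if the averaged centered increments vanish along squares, the left
   leg of the chain has speed v per step; the corrector is bounded, so it does not contribute. *)
lemma chain_speed_from_squares:
  assumes p: "p > 0" and q: "q > 0" and c0: "admissible s c0"
    and squares: "(\<lambda>m. (\<Sum>k<(Suc m)^2. centered_increment s p q (spider_chain s c0 \<xi> k) (\<xi> k))
                     / real ((Suc m)^2)) \<longlonglongrightarrow> 0"
  shows "(\<lambda>n. real_of_int (fst (spider_chain s c0 \<xi> n)) / real n) \<longlonglongrightarrow> ring_speed s p q"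
proof -
  define S where "S n = (\<Sum>k<n. centered_increment s p q (spider_chain s c0 \<xi> k) (\<xi> k))" for n
  define w where "w n = corrector s p q (gap (spider_chain s c0 \<xi> n))" for n
  define R where "R n = real_of_int (fst c0) - w n + w 0" for n
  have "(\<lambda>n. S n / real n) \<longlonglongrightarrow> 0"
    by (rule limit_from_squares_bounded_increments[of S "increment_bound s p q"])
       (use centered_increment_bound[OF p q] squares in \<open>simp_all add: S_def\<close>)
  moreover have "(\<lambda>n. R n / real n) \<longlonglongrightarrow> 0"
  proof (rule Lim_null_comparison[OF _ lim_const_over_n])
    have w_bound: "\<bar>w n\<bar> \<le> real s" for n
      unfolding w_def by (rule corrector_bound[OF admissible_chain[OF c0] p q])
    have "\<bar>R n\<bar> \<le> \<bar>real_of_int (fst c0)\<bar> + 2 * real s" for n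
      unfolding R_def using w_bound[of n] w_bound[of 0] by linarith
    thus "\<forall>\<^sub>F n in sequentially. norm (R n / real n) \<le> (\<bar>real_of_int (fst c0)\<bar> + 2 * real s) / real n"
      by (intro always_eventually allI) (simp add: abs_divide divide_right_mono)
  qed
  ultimately have "(\<lambda>n. S n / real n + R n / real n + ring_speed s p q) \<longlonglongrightarrow> 0 + 0 + ring_speed s p q"
    by (intro tendsto_add tendsto_const)
  moreover have "\<forall>\<^sub>F n in sequentially. S n / real n + R n / real n + ring_speed s p q
                   = real_of_int (fst (spider_chain s c0 \<xi> n)) / real n"
  proof (rule eventually_sequentiallyI[of 1])
    fix n :: nat assume "n \<ge> 1"
    thus "S n / real n + R n / real n + ring_speed s p q = real_of_int (fst (spider_chain s c0 \<xi> n)) / real n"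
      using centered_increments_telescope[OF c0, where n = n and p = p and q = q and \<xi> = \<xi>]
      by (simp add: S_def R_def w_def field_simps)
  qed
  ultimately show ?thesis
    by (auto intro: Lim_transform_eventually)
qed

lemma centered_increment_history:
  assumes "j < k"
  shows "centered_increment s p q (spider_chain s c0 \<xi> j) (\<xi> j)
           = centered_increment s p q (foldl (spider_step s) c0 (take j (map \<xi> [0..<k]))) (map \<xi> [0..<k] ! j)"
  using assms by (simp add: spider_chain_foldl take_map min_def)

lemma (in prob_space) centered_increments_square_integrable:
  fixes \<xi> :: "nat \<Rightarrow> 'a \<Rightarrow> bool \<times> bool" and s :: nat and c :: "int \<times> int"
  assumes indep: "indep_vars (\<lambda>_. count_space UNIV) \<xi> UNIV" and p: "p > 0" and q: "q > 0"
  defines "Z k \<omega> \<equiv> centered_increment s p q (spider_chain s c (\<lambda>i. \<xi> i \<omega>) k) (\<xi> k \<omega>)"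
  shows "Z k \<in> borel_measurable M"
    and "integrable M (\<lambda>\<omega>. Z j \<omega> * Z k \<omega>)"
    and "expectation (\<lambda>\<omega>. Z k \<omega> * Z k \<omega>) \<le> increment_bound s p q ^ 2"
proof -
  note bound = centered_increment_product_bound[OF p q]
  show Z_meas: "Z k \<in> borel_measurable M" for k
  proof -
    define F where "F l = centered_increment s p q (foldl (spider_step s) c (take k l)) (l ! k)" for l
    have "Z k = (\<lambda>\<omega>. F (map (\<lambda>i. \<xi> i \<omega>) [0..<Suc k]))"
      unfolding Z_def F_def by (rule ext, rule centered_increment_history) simp
    thus ?thesis
      using measurable_compose[OF indep_var_rv1[OF indep_var_prefix[OF indep, of "Suc k"]], of F borel]
      by (simp del: upt_Suc)
  qed
  show Z_int: "integrable M (\<lambda>\<omega>. Z j \<omega> * Z k \<omega>)" for j k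
  proof (rule integrable_const_bound[of _ "increment_bound s p q ^ 2"])
    show "AE \<omega> in M. norm (Z j \<omega> * Z k \<omega>) \<le> increment_bound s p q ^ 2" using bound by (simp add: Z_def)
  qed (intro borel_measurable_times Z_meas)
  have "expectation (\<lambda>\<omega>. Z k \<omega> * Z k \<omega>) \<le> expectation (\<lambda>\<omega>. increment_bound s p q ^ 2)"
    by (rule integral_mono[OF Z_int]) (use bound in \<open>auto simp: Z_def abs_le_iff\<close>)
  thus "expectation (\<lambda>\<omega>. Z k \<omega> * Z k \<omega>) \<le> increment_bound s p q ^ 2"
    by (simp add: prob_space)
qed

lemma (in prob_space) centered_increments_orthogonal:
  fixes \<xi> :: "nat \<Rightarrow> 'a \<Rightarrow> bool \<times> bool" and c :: "int \<times> int"
  assumes indep: "indep_vars (\<lambda>_. count_space UNIV) \<xi> UNIV"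
    and law: "\<And>k m. prob {\<omega> \<in> space M. \<xi> k \<omega> = m} = move_prob p q m"
    and s: "s \<ge> 2" and p: "p > 0" and q: "q > 0"
  defines "Z k \<omega> \<equiv> centered_increment s p q (spider_chain s c (\<lambda>i. \<xi> i \<omega>) k) (\<xi> k \<omega>)"
  assumes "j \<noteq> k"
  shows "expectation (\<lambda>\<omega>. Z j \<omega> * Z k \<omega>) = 0"
proof -
  (* The earlier increment is a function of the history before time k, the later one of that
     history and the independent move at time k. *)
  define \<Phi> where "\<Phi> j l = centered_increment s p q (foldl (spider_step s) c (take j l)) (l ! j)" for j l
  define \<Psi> where "\<Psi> l m = centered_increment s p q (foldl (spider_step s) c l) m" for l m
  have orth_lt: "expectation (\<lambda>\<omega>. Z j \<omega> * Z k \<omega>) = 0" if "j < k" for j k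
  proof -
    have "expectation (\<lambda>\<omega>. Z j \<omega> * Z k \<omega>)
        = expectation (\<lambda>\<omega>. \<Phi> j (map (\<lambda>i. \<xi> i \<omega>) [0..<k]) * \<Psi> (map (\<lambda>i. \<xi> i \<omega>) [0..<k]) (\<xi> k \<omega>))"
      unfolding Z_def \<Phi>_def \<Psi>_def
      by (subst centered_increment_history[OF that]) (simp add: spider_chain_foldl)
    also have "\<dots> = 0"
    proof (rule indep_expectation_zero[OF indep_var_prefix[OF indep, of k]])
      show "\<bar>\<Phi> j l * \<Psi> l m\<bar> \<le> increment_bound s p q ^ 2" for l m
        unfolding \<Phi>_def \<Psi>_def by (rule centered_increment_product_bound[OF p q])
      show "prob {\<omega> \<in> space M. \<xi> k \<omega> = m} = move_prob p q m" for m by (rule law)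
      show "(\<Sum>m\<in>UNIV. move_prob p q m * (\<Phi> j l * \<Psi> l m)) = 0" for l
        using centered_increment_mean_zero[OF s p q]
        by (simp add: \<Psi>_def sum_distrib_left[symmetric] mult.left_commute)
    qed
    finally show ?thesis .
  qed
  show ?thesis
    using orth_lt[of j k] orth_lt[of k j] \<open>j \<noteq> k\<close> by (cases "j < k") (simp_all add: mult.commute)
qed

lemma (in prob_space) spider_chain_slln:
  fixes \<xi> :: "nat \<Rightarrow> 'a \<Rightarrow> bool \<times> bool"
  assumes indep: "indep_vars (\<lambda>_. count_space UNIV) \<xi> UNIV"
    and law: "\<And>k m. prob {\<omega> \<in> space M. \<xi> k \<omega> = m} = move_prob p q m"
    and s: "s \<ge> 2" and p: "p > 0" and q: "q > 0" and c0: "admissible s c0"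
  shows "AE \<omega> in M. (\<lambda>n. real_of_int (fst (spider_chain s c0 (\<lambda>i. \<xi> i \<omega>) n)) / real n)
                      \<longlonglongrightarrow> ring_speed s p q"
proof -
  define Z where "Z k \<omega> = centered_increment s p q (spider_chain s c0 (\<lambda>i. \<xi> i \<omega>) k) (\<xi> k \<omega>)" for k \<omega>
  have "AE \<omega> in M. (\<lambda>m. (\<Sum>k<(Suc m)^2. Z k \<omega>) / real ((Suc m)^2)) \<longlonglongrightarrow> 0"
    using centered_increments_square_integrable[OF indep p q, where s = s and c = c0, folded Z_def]
      centered_increments_orthogonal[OF indep law s p q, where c = c0, folded Z_def]
    by (intro orthogonal_slln_squares[where Z = Z]) auto
  thus ?thesis
    by (rule AE_mp, intro AE_I2 impI chain_speed_from_squares[OF p q c0]) (simp add: Z_def)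
qed

(* Combining with the strong law for the clock through the renewal principle: the walk moves at
   speed v times the ring rate 2(p+q), that is (p-q)(1-1/s), almost surely. *)
lemma (in prob_space) spider_walk_slln:
  fixes T :: "nat \<Rightarrow> 'a \<Rightarrow> real" and \<xi> :: "nat \<Rightarrow> 'a \<Rightarrow> bool \<times> bool"
  assumes indep_T: "indep_vars (\<lambda>_. borel) T UNIV"
    and T_exp: "\<And>n. distributed M lborel (T n) (exponential_density (2 * (p + q)))"
    and indep_\<xi>: "indep_vars (\<lambda>_. count_space UNIV) \<xi> UNIV"
    and law: "\<And>k m. prob {\<omega> \<in> space M. \<xi> k \<omega> = m} = move_prob p q m"
    and s: "s \<ge> 2" and p: "p > 0" and q: "q > 0" and c0: "admissible s c0"
  shows "AE \<omega> in M. ((\<lambda>t. real_of_int (fst (spider_walk s c0 (\<lambda>n. T n \<omega>) (\<lambda>n. \<xi> n \<omega>) t)) / t)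
                      \<longlongrightarrow> (p - q) * (1 - 1 / real s)) at_top"
proof -
  have rate: "2 * (p + q) > 0" using p q by simp
  have speed: "ring_speed s p q / (1 / (2 * (p + q))) = (p - q) * (1 - 1 / real s)"
    using rate by (simp add: ring_speed_def)
  have chain_speed: "AE \<omega> in M. (\<lambda>n. real_of_int (fst (spider_chain s c0 (\<lambda>i. \<xi> i \<omega>) n)) / real n)
                      \<longlonglongrightarrow> ring_speed s p q"
    by (rule spider_chain_slln[OF indep_\<xi> law s p q c0])
  have clock_rate: "AE \<omega> in M. (\<lambda>n. (\<Sum>i<n. T i \<omega>) / real n) \<longlonglongrightarrow> 1 / (2 * (p + q))"
    by (rule exponential_slln[OF indep_T T_exp rate])
  have clock_nonneg: "AE \<omega> in M. \<forall>n. 0 \<le> T n \<omega>" by (rule exponential_nonneg[OF T_exp])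
  show ?thesis
    using chain_speed clock_rate clock_nonneg
  proof eventually_elim
    case (elim \<omega>)
    show ?case
      unfolding spider_walk_def speed[symmetric] by (rule renewal_limit) (use elim rate in auto)
  qed
qed

lemma spider_speed_slower:
  assumes "s \<ge> 2" "p \<noteq> q"
  shows "\<bar>(p - q) * (1 - 1 / real s)\<bar> < \<bar>p - q\<bar>"
proof -
  have "0 < 1 - 1 / real s" "1 - 1 / real s < 1" using assms(1) by (auto simp: field_simps)
  thus ?thesis using assms(2) by (simp add: abs_mult)
qed

lemma spider_speed_limit: "((\<lambda>r::nat. (p - q) * (1 - 1 / real r)) \<longlongrightarrow> p - q) at_top"
proof -
  have "((\<lambda>r::nat. (p - q) * (1 - 1 / real r)) \<longlongrightarrow> (p - q) * (1 - 0)) at_top"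
    by (intro tendsto_intros)
  thus ?thesis by simp
qed

theorem mainTheorem4:
  fixes M :: "'w measure" and s :: nat and p q :: real and x0 j0 :: int
    and T :: "nat \<Rightarrow> 'w \<Rightarrow> real" and \<xi> :: "nat \<Rightarrow> 'w \<Rightarrow> bool \<times> bool"
  assumes "prob_space M"
    and "s \<ge> 2" and "p > 0" and "q > 0"
    and "1 \<le> j0" and "j0 \<le> int s"
    and T_exp: "\<And>n. distributed M lborel (T n) (exponential_density (2 * (p + q)))"
    and \<xi>_meas: "\<And>n. \<xi> n \<in> measurable M (count_space UNIV)"
    and \<xi>_up: "\<And>n l. measure M {\<omega> \<in> space M. \<xi> n \<omega> = (l, True)} = p / (2 * (p + q))"
    and \<xi>_down: "\<And>n l. measure M {\<omega> \<in> space M. \<xi> n \<omega> = (l, False)} = q / (2 * (p + q))"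
    and indep: "prob_space.indep_sets M
          (\<lambda>i. case i of
                  Inl n \<Rightarrow> {T n -` A \<inter> space M | A. A \<in> sets (borel :: real measure)}
                | Inr n \<Rightarrow> {\<xi> n -` A \<inter> space M | A. A \<in> sets (count_space UNIV)})
          (UNIV :: (nat + nat) set)"
  shows "(AE \<omega> in M.
            ((\<lambda>t. real_of_int (fst (spider_walk s (x0, x0 + j0) (\<lambda>n. T n \<omega>) (\<lambda>n. \<xi> n \<omega>) t)) / t)
               \<longlongrightarrow> (p - q) * (1 - 1 / real s)) at_top)
         \<and> (p \<noteq> q \<longrightarrow> \<bar>(p - q) * (1 - 1 / real s)\<bar> < \<bar>p - q\<bar>)
         \<and> ((\<lambda>r::nat. (p - q) * (1 - 1 / real r)) \<longlongrightarrow> p - q) at_top"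
proof -
  interpret prob_space M by (rule assms(1))
  have T_meas: "T n \<in> borel_measurable M" for n
    using distributed_measurable[OF T_exp[of n]] by simp
  note indep_T = indep_vars_of_joint(1)[OF indep T_meas \<xi>_meas]
    and indep_\<xi> = indep_vars_of_joint(2)[OF indep T_meas \<xi>_meas]
  have law: "prob {\<omega> \<in> space M. \<xi> k \<omega> = m} = move_prob p q m" for k m
    using \<xi>_up \<xi>_down by (cases m) (auto simp: move_prob_def)
  have c0: "admissible s (x0, x0 + j0)" using assms by (simp add: admissible_def)
  show ?thesis
    using spider_walk_slln[OF indep_T T_exp indep_\<xi> law assms(2-4) c0]
      spider_speed_slower[OF assms(2)] spider_speed_limit by blast
qed

end
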